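(* Let $(L,\le,\bot,\top)$ be a complete lattice and $(\&_i,\swarrow^i,\nwarrow_i)$, $i=1,\dots,n$, adjoint triples on $L$ with $x\,\&_i\,\top=\top\,\&_i\,x=x$ for all $x\in L$ and all $i$. Let $(A,B,R,\sigma)$ be a normalized context with concept lattice $\mathcal{M}$. If $\mathcal{M}$ has a decomposition into independent blocks, then $(A,B,R,\sigma)$ can be decomposed into independent subcontexts.
   Context: An adjoint triple on $L$ is a triple of maps $\&,\swarrow,\nwarrow\colon L\times L\to L$ with $x\le z\swarrow y\iff x\& y\le z\iff y\le z\nwarrow x$. A context is $(A,B,R,\sigma)$ with $A,B$ non-empty, $R\colon A\times B\to L$, $\sigma\colon A\times B\to\{1,\dots,n\}$; normalized means every $a\in A$ has $b_1,b_2$ with $R(a,b_1)\ne\bot$, $R(a,b_2)=\bot$, and every $b\in B$ has $a_1,a_2$ with $R(a_1,b)\ne\bot$, $R(a_2,b)=\bot$. For $g\colon B\to L$, $f\colon A\to L$: $g^\uparrow(a)=\inf_{b}R(a,b)\swarrow^{\sigma(a,b)}g(b)$, $f^\downarrow(b)=\inf_{a}R(a,b)\nwarrow_{\sigma(a,b)}f(a)$. $\mathcal{M}$ is the complete lattice of pairs $\langle g,f\rangle$ with $g^\uparrow=f$, $f^\downarrow=g$, ordered by $g_1\le g_2$ pointwise. For a bounded lattice $(M,\preceq,\bot,\top)$, a block is a sublattice $K\subsetneq M$ with $K\setminus\{\bot,\top\}\ne\varnothing$ and $(\{x\mid k\preceq x\}\cup\{x\mid x\preceq k\})\setminus\{\bot,\top\}\subseteq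 K$ for all $k\in K\setminus\{\bot,\top\}$; blocks $K_1,K_2$ are independent if $K_1\cap K_2\subseteq\{\bot,\top\}$; a decomposition into independent blocks is a family of pairwise independent blocks whose union is $M$. A separable subcontext is a tuple $(Y,X,R_{Y\times X},\sigma_{Y\times X})$ (restrictions of $R,\sigma$) with $Y\subsetneq A$, $X\subsetneq B$ non-empty, $R(a,b)\neq\bot$ for some $a\in Y,b\in X$, $R=\bot$ on $Y\times(B\setminus X)$ and on $(A\setminus Y)\times X$. $\&$ has zero-divisors if $x\&y=\bot$ for some $x,y\neq\bot$. A decomposition into independent subcontexts is a family $\{(A_\lambda,B_\lambda,R_\lambda,\sigma_\lambda)\}_{\lambda\in\Lambda}$, $\Lambda\ne\varnothing$, $R_\lambda,\sigma_\lambda$ restrictions to $A_\lambda\times B_\lambda$, such that each tuple is a separable subcontext, the $A_\lambda$ are pairwise disjoint with union $A$, the $B_\lambda$ are pairwise disjoint with union $B$, and for each $\lambda$ the conjunctor $\&_{\sigma(a,b)}$ has no zero-divisors for all $(a,b)\in((A\setminus A_\lambda)\times B_\lambda)\cup(A_\lambda\times(B\setminus B_\lambda))$. *)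

theory Defs
  imports "HOL-Library.FuncSet"
begin

text \<open>Adjoint triples indexed by i: conj i x y is x &_i y,
  sw i z y is z swarrow^i y, nw i z x is z nwarrow_i x.\<close>

definition adjoint_triple ::
  "('l::complete_lattice \<Rightarrow> 'l \<Rightarrow> 'l) \<Rightarrow> ('l \<Rightarrow> 'l \<Rightarrow> 'l) \<Rightarrow> ('l \<Rightarrow> 'l \<Rightarrow> 'l) \<Rightarrow> bool" where
  "adjoint_triple cj sw nw \<longleftrightarrow>
     (\<forall>x y z. (x \<le> sw z y \<longleftrightarrow> cj x y \<le> z) \<and> (cj x y \<le> z \<longleftrightarrow> y \<le> nw z x))"

definition normalized_context ::
  "'a set \<Rightarrow> 'b set \<Rightarrow> ('a \<Rightarrow> 'b \<Rightarrow> 'l::complete_lattice) \<Rightarrow> bool" where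
  "normalized_context A B R \<longleftrightarrow>
     (\<forall>a\<in>A. (\<exists>b1\<in>B. R a b1 \<noteq> bot) \<and> (\<exists>b2\<in>B. R a b2 = bot)) \<and>
     (\<forall>b\<in>B. (\<exists>a1\<in>A. R a1 b \<noteq> bot) \<and> (\<exists>a2\<in>A. R a2 b = bot))"

definition up_op ::
  "(nat \<Rightarrow> 'l \<Rightarrow> 'l \<Rightarrow> 'l::complete_lattice) \<Rightarrow> 'a set \<Rightarrow> 'b set \<Rightarrow> ('a \<Rightarrow> 'b \<Rightarrow> 'l)
    \<Rightarrow> ('a \<Rightarrow> 'b \<Rightarrow> nat) \<Rightarrow> ('b \<Rightarrow> 'l) \<Rightarrow> ('a \<Rightarrow> 'l)" where
  "up_op sw A B R \<sigma> g = restrict (\<lambda>a. INF b\<in>B. sw (\<sigma> a b) (R a b) (g b)) A"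

definition down_op ::
  "(nat \<Rightarrow> 'l \<Rightarrow> 'l \<Rightarrow> 'l::complete_lattice) \<Rightarrow> 'a set \<Rightarrow> 'b set \<Rightarrow> ('a \<Rightarrow> 'b \<Rightarrow> 'l)
    \<Rightarrow> ('a \<Rightarrow> 'b \<Rightarrow> nat) \<Rightarrow> ('a \<Rightarrow> 'l) \<Rightarrow> ('b \<Rightarrow> 'l)" where
  "down_op nw A B R \<sigma> f = restrict (\<lambda>b. INF a\<in>A. nw (\<sigma> a b) (R a b) (f a)) B"

definition concepts ::
  "(nat \<Rightarrow> 'l \<Rightarrow> 'l \<Rightarrow> 'l::complete_lattice) \<Rightarrow> (nat \<Rightarrow> 'l \<Rightarrow> 'l \<Rightarrow> 'l) \<Rightarrow> 'a set \<Rightarrow> 'b set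
    \<Rightarrow> ('a \<Rightarrow> 'b \<Rightarrow> 'l) \<Rightarrow> ('a \<Rightarrow> 'b \<Rightarrow> nat) \<Rightarrow> (('b \<Rightarrow> 'l) \<times> ('a \<Rightarrow> 'l)) set" where
  "concepts sw nw A B R \<sigma> =
     {(g, f). up_op sw A B R \<sigma> g = f \<and> down_op nw A B R \<sigma> f = g}"

definition concept_le :: "'b set \<Rightarrow> ('b \<Rightarrow> 'l::complete_lattice) \<times> ('a \<Rightarrow> 'l) \<Rightarrow> ('b \<Rightarrow> 'l) \<times> ('a \<Rightarrow> 'l) \<Rightarrow> bool" where
  "concept_le B c d \<longleftrightarrow> (\<forall>b\<in>B. fst c b \<le> fst d b)"

definition lbounds :: "'m set \<Rightarrow> ('m \<Rightarrow> 'm \<Rightarrow> bool) \<Rightarrow> 'm set" where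
  "lbounds M le = {x\<in>M. (\<forall>y\<in>M. le x y) \<or> (\<forall>y\<in>M. le y x)}"

definition is_inf_in :: "'m set \<Rightarrow> ('m \<Rightarrow> 'm \<Rightarrow> bool) \<Rightarrow> 'm \<Rightarrow> 'm \<Rightarrow> 'm \<Rightarrow> bool" where
  "is_inf_in M le x y z \<longleftrightarrow> z \<in> M \<and> le z x \<and> le z y \<and> (\<forall>w\<in>M. le w x \<and> le w y \<longrightarrow> le w z)"

definition is_sup_in :: "'m set \<Rightarrow> ('m \<Rightarrow> 'm \<Rightarrow> bool) \<Rightarrow> 'm \<Rightarrow> 'm \<Rightarrow> 'm \<Rightarrow> bool" where
  "is_sup_in M le x y z \<longleftrightarrow> z \<in> M \<and> le x z \<and> le y z \<and> (\<forall>w\<in>M. le x w \<and> le y w \<longrightarrow> le z w)"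

definition sublattice :: "'m set \<Rightarrow> ('m \<Rightarrow> 'm \<Rightarrow> bool) \<Rightarrow> 'm set \<Rightarrow> bool" where
  "sublattice M le K \<longleftrightarrow> K \<subseteq> M \<and>
     (\<forall>x\<in>K. \<forall>y\<in>K. \<forall>z. is_inf_in M le x y z \<longrightarrow> z \<in> K) \<and>
     (\<forall>x\<in>K. \<forall>y\<in>K. \<forall>z. is_sup_in M le x y z \<longrightarrow> z \<in> K)"

definition is_block :: "'m set \<Rightarrow> ('m \<Rightarrow> 'm \<Rightarrow> bool) \<Rightarrow> 'm set \<Rightarrow> bool" where
  "is_block M le K \<longleftrightarrow> sublattice M le K \<and> K \<subset> M \<and> K - lbounds M le \<noteq> {} \<and>
     (\<forall>k \<in> K - lbounds M le.
        ({x\<in>M. le k x} \<union> {x\<in>M. le x k}) - lbounds M le \<subseteq> K)"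

definition independent_blocks :: "'m set \<Rightarrow> ('m \<Rightarrow> 'm \<Rightarrow> bool) \<Rightarrow> 'm set \<Rightarrow> 'm set \<Rightarrow> bool" where
  "independent_blocks M le K1 K2 \<longleftrightarrow> K1 \<inter> K2 \<subseteq> lbounds M le"

definition has_block_decomposition :: "'m set \<Rightarrow> ('m \<Rightarrow> 'm \<Rightarrow> bool) \<Rightarrow> bool" where
  "has_block_decomposition M le \<longleftrightarrow>
     (\<exists>\<K>. (\<forall>K\<in>\<K>. is_block M le K) \<and>
          (\<forall>K1\<in>\<K>. \<forall>K2\<in>\<K>. K1 \<noteq> K2 \<longrightarrow> independent_blocks M le K1 K2) \<and>
          \<Union>\<K> = M)"

definition separable_subcontext ::
  "'a set \<Rightarrow> 'b set \<Rightarrow> ('a \<Rightarrow> 'b \<Rightarrow> 'l::complete_lattice) \<Rightarrow> 'a set \<Rightarrow> 'b set \<Rightarrow> bool" where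
  "separable_subcontext A B R Y X \<longleftrightarrow>
     Y \<subset> A \<and> X \<subset> B \<and> Y \<noteq> {} \<and> X \<noteq> {} \<and>
     (\<exists>a\<in>Y. \<exists>b\<in>X. R a b \<noteq> bot) \<and>
     (\<forall>a\<in>Y. \<forall>b\<in>B - X. R a b = bot) \<and>
     (\<forall>a\<in>A - Y. \<forall>b\<in>X. R a b = bot)"

definition no_zero_divisors :: "('l::complete_lattice \<Rightarrow> 'l \<Rightarrow> 'l) \<Rightarrow> bool" where
  "no_zero_divisors cj \<longleftrightarrow> (\<forall>x y. x \<noteq> bot \<longrightarrow> y \<noteq> bot \<longrightarrow> cj x y \<noteq> bot)"

text \<open>A decomposition into independent subcontexts, given as a family of index
  pairs (A_lambda, B_lambda); R and sigma are restricted implicitly.\<close>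

definition independent_subcontext_decomposition ::
  "(nat \<Rightarrow> 'l \<Rightarrow> 'l \<Rightarrow> 'l::complete_lattice) \<Rightarrow> 'a set \<Rightarrow> 'b set \<Rightarrow> ('a \<Rightarrow> 'b \<Rightarrow> 'l)
    \<Rightarrow> ('a \<Rightarrow> 'b \<Rightarrow> nat) \<Rightarrow> ('a set \<times> 'b set) set \<Rightarrow> bool" where
  "independent_subcontext_decomposition cj A B R \<sigma> D \<longleftrightarrow>
     D \<noteq> {} \<and>
     (\<forall>(Y, X)\<in>D. separable_subcontext A B R Y X) \<and>
     (\<forall>(Y1, X1)\<in>D. \<forall>(Y2, X2)\<in>D. (Y1, X1) \<noteq> (Y2, X2) \<longrightarrow> Y1 \<inter> Y2 = {} \<and> X1 \<inter> X2 = {}) \<and>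
     \<Union>(fst ` D) = A \<and> \<Union>(snd ` D) = B \<and>
     (\<forall>(Y, X)\<in>D. \<forall>(a, b)\<in>((A - Y) \<times> X) \<union> (Y \<times> (B - X)). no_zero_divisors (cj (\<sigma> a b)))"

end

theory Submission
  imports Defs
begin

text \<open>
  Call a concept proper if it is neither the least nor the greatest one; as R vanishes somewhere
  in every row and every column, a concept is proper iff both its extent and its intent take a
  non-bottom value. If x & y <= R(a, b) for the conjunctor of (a, b) and non-bottom x, y, then
  the concept generated by the singleton extent y/b lies below the concept generated by the
  singleton intent x/a, and these two proper concepts link the attribute concept of a to the
  object concept of b by a chain of comparable proper concepts. A block contains every proper
  concept comparable to one of its proper elements, so the attribute concept of a and the object
  concept of b lie in the same blocks. With (x, y) = (top, R(a, b)) this confines the incidences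
  of R to the blocks, and with x & y = bot it rules out zero divisors between different blocks.
  Hence grouping attributes and objects by the block containing their attribute and object
  concepts decomposes the context: below every proper concept lies a proper concept with
  singleton extent, so every block contains an object concept and thus an attribute concept.
\<close>

definition fuzzy_singleton :: "'x \<Rightarrow> 'l \<Rightarrow> 'x \<Rightarrow> 'l::complete_lattice" where
  "fuzzy_singleton p v = (\<lambda>q. if q = p then v else bot)"

lemma fuzzy_singleton_same [simp]: "fuzzy_singleton p v p = v"
  by (simp add: fuzzy_singleton_def)

lemma fuzzy_singleton_mono: "v \<le> w \<Longrightarrow> fuzzy_singleton p v q \<le> fuzzy_singleton p w q"
  by (simp add: fuzzy_singleton_def)

lemma block_member_iff_comparable:
  assumes "is_block M le K"
    and "p \<in> M - lbounds M le" "q \<in> M - lbounds M le" "le p q \<or> le q p"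
  shows "p \<in> K \<longleftrightarrow> q \<in> K"
  using assms unfolding is_block_def by blast

lemma block_has_proper_element:
  assumes "is_block M le K"
  obtains p where "p \<in> K" "p \<in> M - lbounds M le"
  using assms unfolding is_block_def sublattice_def by blast

locale adjoint_context =
  fixes cj sw nw :: "nat \<Rightarrow> 'l::complete_lattice \<Rightarrow> 'l \<Rightarrow> 'l"
    and A :: "'a set" and B :: "'b set"
    and R :: "'a \<Rightarrow> 'b \<Rightarrow> 'l" and \<sigma> :: "'a \<Rightarrow> 'b \<Rightarrow> nat"
  assumes adjoint: "\<lbrakk>a \<in> A; b \<in> B\<rbrakk> \<Longrightarrow> adjoint_triple (cj (\<sigma> a b)) (sw (\<sigma> a b)) (nw (\<sigma> a b))"
begin

abbreviation "up \<equiv> up_op sw A B R \<sigma>"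
abbreviation "down \<equiv> down_op nw A B R \<sigma>"
abbreviation "\<M> \<equiv> concepts sw nw A B R \<sigma>"

lemma sw_adjoint: "\<lbrakk>a \<in> A; b \<in> B\<rbrakk> \<Longrightarrow> x \<le> sw (\<sigma> a b) z y \<longleftrightarrow> cj (\<sigma> a b) x y \<le> z"
  using adjoint unfolding adjoint_triple_def by blast

lemma nw_adjoint: "\<lbrakk>a \<in> A; b \<in> B\<rbrakk> \<Longrightarrow> y \<le> nw (\<sigma> a b) z x \<longleftrightarrow> cj (\<sigma> a b) x y \<le> z"
  using adjoint unfolding adjoint_triple_def by blast

lemma conj_bot_left: "\<lbrakk>a \<in> A; b \<in> B\<rbrakk> \<Longrightarrow> cj (\<sigma> a b) bot y = bot"
  using sw_adjoint[of a b bot bot y] by (simp add: bot_unique)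

lemma conj_bot_right: "\<lbrakk>a \<in> A; b \<in> B\<rbrakk> \<Longrightarrow> cj (\<sigma> a b) x bot = bot"
  using nw_adjoint[of a b bot bot x] by (simp add: bot_unique)

lemma le_down_iff:
  "(\<forall>b\<in>B. g b \<le> down f b) \<longleftrightarrow> (\<forall>a\<in>A. \<forall>b\<in>B. cj (\<sigma> a b) (f a) (g b) \<le> R a b)"
  unfolding down_op_def using nw_adjoint by (auto simp: le_INF_iff)

lemma le_up_iff:
  "(\<forall>a\<in>A. f a \<le> up g a) \<longleftrightarrow> (\<forall>a\<in>A. \<forall>b\<in>B. cj (\<sigma> a b) (f a) (g b) \<le> R a b)"
  unfolding up_op_def using sw_adjoint by (auto simp: le_INF_iff)

lemma galois_connection: "(\<forall>b\<in>B. g b \<le> down f b) \<longleftrightarrow> (\<forall>a\<in>A. f a \<le> up g a)"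
  by (simp only: le_down_iff le_up_iff)

lemma down_up_extensive: "b \<in> B \<Longrightarrow> g b \<le> down (up g) b"
  using galois_connection[of g "up g"] by simp

lemma up_down_extensive: "a \<in> A \<Longrightarrow> f a \<le> up (down f) a"
  using galois_connection[of "down f" f] by simp

lemma up_antimono:
  assumes "\<forall>b\<in>B. g b \<le> g' b"
  shows "\<forall>a\<in>A. up g' a \<le> up g a"
proof -
  have "\<forall>b\<in>B. g b \<le> down (up g') b"
    using assms down_up_extensive order_trans by blast
  then show ?thesis by (simp only: galois_connection)
qed

lemma down_antimono:
  assumes "\<forall>a\<in>A. f a \<le> f' a"
  shows "\<forall>b\<in>B. down f' b \<le> down f b"
proof -
  have "\<forall>a\<in>A. f a \<le> up (down f') a"
    using assms up_down_extensive order_trans by blast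
  then show ?thesis by (simp only: galois_connection)
qed

lemma up_down_up: "up (down (up g)) = up g"
proof
  fix a
  show "up (down (up g)) a = up g a"
  proof (cases "a \<in> A")
    case True
    then have "up (down (up g)) a \<le> up g a"
      using up_antimono[of g "down (up g)"] down_up_extensive by blast
    then show ?thesis using up_down_extensive[OF True] by (rule antisym)
  next
    case False
    then show ?thesis by (simp add: up_op_def)
  qed
qed

lemma down_up_down: "down (up (down f)) = down f"
proof
  fix b
  show "down (up (down f)) b = down f b"
  proof (cases "b \<in> B")
    case True
    then have "down (up (down f)) b \<le> down f b"
      using down_antimono[of f "up (down f)"] up_down_extensive by blast
    then show ?thesis using down_up_extensive[OF True] by (rule antisym)
  next
    case False
    then show ?thesis by (simp add: down_op_def)
  qed
qed

definition concept_of_extent :: "('b \<Rightarrow> 'l) \<Rightarrow> ('b \<Rightarrow> 'l) \<times> ('a \<Rightarrow> 'l)" where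
  "concept_of_extent g = (down (up g), up g)"

definition concept_of_intent :: "('a \<Rightarrow> 'l) \<Rightarrow> ('b \<Rightarrow> 'l) \<times> ('a \<Rightarrow> 'l)" where
  "concept_of_intent f = (down f, up (down f))"

lemma concept_of_extent_in_concepts: "concept_of_extent g \<in> \<M>"
  unfolding concept_of_extent_def concepts_def by (simp add: up_down_up)

lemma concept_of_intent_in_concepts: "concept_of_intent f \<in> \<M>"
  unfolding concept_of_intent_def concepts_def by (simp add: down_up_down)

lemma concept_of_extent_eq: "(g, f) \<in> \<M> \<Longrightarrow> concept_of_extent g = (g, f)"
  unfolding concept_of_extent_def concepts_def by auto

lemma concept_of_extent_mono:
  "\<forall>b\<in>B. g b \<le> g' b \<Longrightarrow> concept_le B (concept_of_extent g) (concept_of_extent g')"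
  unfolding concept_le_def concept_of_extent_def by (simp add: down_antimono up_antimono)

lemma concept_of_intent_antimono:
  "\<forall>a\<in>A. f a \<le> f' a \<Longrightarrow> concept_le B (concept_of_intent f') (concept_of_intent f)"
  unfolding concept_le_def concept_of_intent_def by (simp add: down_antimono)

lemma concept_of_extent_le_concept_of_intent:
  assumes "\<forall>b\<in>B. g b \<le> down f b"
  shows "concept_le B (concept_of_extent g) (concept_of_intent f)"
proof -
  have "concept_of_extent (down f) = concept_of_intent f"
    unfolding concept_of_extent_def concept_of_intent_def by (simp add: down_up_down)
  then show ?thesis using concept_of_extent_mono[OF assms] by simp
qed

lemma singletons_le_down_iff:
  assumes "a \<in> A" "b \<in> B"
  shows "(\<forall>b'\<in>B. fuzzy_singleton b y b' \<le> down (fuzzy_singleton a x) b')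
    \<longleftrightarrow> cj (\<sigma> a b) x y \<le> R a b"
  unfolding le_down_iff using assms by (auto simp: fuzzy_singleton_def conj_bot_left conj_bot_right)

lemma down_bot_eq_top: "b \<in> B \<Longrightarrow> down (\<lambda>_. bot) b = top"
  unfolding down_op_def by (simp add: top_unique[symmetric] le_INF_iff nw_adjoint conj_bot_left)

end

locale unital_normalized_context = adjoint_context cj sw nw A B R \<sigma>
  for cj sw nw :: "nat \<Rightarrow> 'l::complete_lattice \<Rightarrow> 'l \<Rightarrow> 'l"
    and A :: "'a set" and B :: "'b set"
    and R :: "'a \<Rightarrow> 'b \<Rightarrow> 'l" and \<sigma> :: "'a \<Rightarrow> 'b \<Rightarrow> nat" +
  assumes unit: "\<lbrakk>a \<in> A; b \<in> B\<rbrakk> \<Longrightarrow> cj (\<sigma> a b) x top = x \<and> cj (\<sigma> a b) top x = x"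
    and normalized: "normalized_context A B R"
begin

abbreviation "proper_concepts \<equiv> \<M> - lbounds \<M> (concept_le B)"

lemma up_top_eq_bot:
  assumes a: "a \<in> A"
  shows "up (\<lambda>_. top) a = bot"
proof -
  obtain b where b: "b \<in> B" "R a b = bot"
    using normalized a unfolding normalized_context_def by blast
  have "up (\<lambda>_. top) a \<le> sw (\<sigma> a b) (R a b) top"
    unfolding up_op_def using a b(1) by (auto intro: INF_lower)
  also have "\<dots> = sw (\<sigma> a b) bot top" using b(2) by simp
  also have "\<dots> \<le> bot"
    using sw_adjoint[OF a b(1), of "sw (\<sigma> a b) bot top" bot top] unit[OF a b(1)] by simp
  finally show ?thesis by (rule bot_unique[THEN iffD1])
qed

lemma down_top_eq_bot:
  assumes b: "b \<in> B"
  shows "down (\<lambda>_. top) b = bot"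
proof -
  obtain a where a: "a \<in> A" "R a b = bot"
    using normalized b unfolding normalized_context_def by blast
  have "down (\<lambda>_. top) b \<le> nw (\<sigma> a b) (R a b) top"
    unfolding down_op_def using a(1) b by (auto intro: INF_lower)
  also have "\<dots> = nw (\<sigma> a b) bot top" using a(2) by simp
  also have "\<dots> \<le> bot"
    using nw_adjoint[OF a(1) b, of "nw (\<sigma> a b) bot top" bot top] unit[OF a(1) b] by simp
  finally show ?thesis by (rule bot_unique[THEN iffD1])
qed

lemma proper_concept_iff:
  assumes c: "(g, f) \<in> \<M>"
  shows "(g, f) \<in> proper_concepts \<longleftrightarrow> (\<exists>a\<in>A. f a \<noteq> bot) \<and> (\<exists>b\<in>B. g b \<noteq> bot)"
proof -
  have g: "g = down f" and f: "f = up g" using c unfolding concepts_def by auto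
  have least_iff: "(\<forall>d\<in>\<M>. concept_le B (g, f) d) \<longleftrightarrow> (\<forall>b\<in>B. g b = bot)"
  proof
    assume "\<forall>d\<in>\<M>. concept_le B (g, f) d"
    then have "concept_le B (g, f) (concept_of_intent (\<lambda>_. top))"
      using concept_of_intent_in_concepts by blast
    then show "\<forall>b\<in>B. g b = bot"
      unfolding concept_le_def concept_of_intent_def by (simp add: down_top_eq_bot bot_unique)
  qed (simp add: concept_le_def)
  have greatest_iff: "(\<forall>d\<in>\<M>. concept_le B d (g, f)) \<longleftrightarrow> (\<forall>a\<in>A. f a = bot)"
  proof
    assume "\<forall>d\<in>\<M>. concept_le B d (g, f)"
    then have "concept_le B (concept_of_intent (\<lambda>_. bot)) (g, f)"
      using concept_of_intent_in_concepts by blast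
    then have "\<forall>b\<in>B. (\<lambda>_. top) b \<le> g b"
      unfolding concept_le_def concept_of_intent_def by (simp add: down_bot_eq_top)
    then have "\<forall>a\<in>A. f a \<le> up (\<lambda>_. top) a" unfolding f by (rule up_antimono)
    then show "\<forall>a\<in>A. f a = bot" by (simp add: up_top_eq_bot bot_unique)
  next
    assume "\<forall>a\<in>A. f a = bot"
    then have "concept_le B (g', f') (g, f)" if "(g', f') \<in> \<M>" for g' f'
      using that down_antimono[of f f'] unfolding g concept_le_def concepts_def by auto
    then show "\<forall>d\<in>\<M>. concept_le B d (g, f)" by auto
  qed
  have "(g, f) \<in> lbounds \<M> (concept_le B) \<longleftrightarrow> (\<forall>b\<in>B. g b = bot) \<or> (\<forall>a\<in>A. f a = bot)"
    using c by (simp add: lbounds_def least_iff greatest_iff)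
  then show ?thesis using c by auto
qed

lemma proper_concept_if_nonbot:
  assumes "(g, f) \<in> \<M>" "a \<in> A" "b \<in> B" "x \<le> f a" "y \<le> g b" "x \<noteq> bot" "y \<noteq> bot"
  shows "(g, f) \<in> proper_concepts"
proof -
  have "f a \<noteq> bot" "g b \<noteq> bot" using assms(4-7) by (auto simp: bot_unique)
  then show ?thesis using proper_concept_iff[OF assms(1)] assms(2,3) by blast
qed

lemma proper_concepts_of_singletons:
  assumes a: "a \<in> A" and b: "b \<in> B" and x: "x \<noteq> bot" and y: "y \<noteq> bot"
    and le: "cj (\<sigma> a b) x y \<le> R a b"
  shows "concept_of_extent (fuzzy_singleton b y) \<in> proper_concepts"
    and "concept_of_intent (fuzzy_singleton a x) \<in> proper_concepts"
    and "concept_le B (concept_of_extent (fuzzy_singleton b y))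
      (concept_of_intent (fuzzy_singleton a x))"
proof -
  let ?g = "fuzzy_singleton b y" and ?f = "fuzzy_singleton a x"
  have below: "\<forall>b'\<in>B. ?g b' \<le> down ?f b'"
    using singletons_le_down_iff[OF a b] le by blast
  then have "\<forall>a'\<in>A. ?f a' \<le> up ?g a'" by (simp only: galois_connection)
  then have "x \<le> up ?g a" using a by fastforce
  moreover have "y \<le> down (up ?g) b" using down_up_extensive[OF b, of ?g] by simp
  ultimately show "concept_of_extent ?g \<in> proper_concepts"
    unfolding concept_of_extent_def
    by (rule proper_concept_if_nonbot[OF concept_of_extent_in_concepts[unfolded concept_of_extent_def]
          a b _ _ x y])
  have "x \<le> up (down ?f) a" using up_down_extensive[OF a, of ?f] by simp
  moreover have "y \<le> down ?f b" using below b by fastforce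
  ultimately show "concept_of_intent ?f \<in> proper_concepts"
    unfolding concept_of_intent_def
    by (rule proper_concept_if_nonbot[OF concept_of_intent_in_concepts[unfolded concept_of_intent_def]
          a b _ _ x y])
  show "concept_le B (concept_of_extent ?g) (concept_of_intent ?f)"
    using below by (rule concept_of_extent_le_concept_of_intent)
qed

definition attribute_concept :: "'a \<Rightarrow> ('b \<Rightarrow> 'l) \<times> ('a \<Rightarrow> 'l)" where
  "attribute_concept a = concept_of_intent (fuzzy_singleton a top)"

definition object_concept :: "'b \<Rightarrow> ('b \<Rightarrow> 'l) \<times> ('a \<Rightarrow> 'l)" where
  "object_concept b = concept_of_extent (fuzzy_singleton b top)"

lemma attribute_concept_le:
  "concept_le B (attribute_concept a) (concept_of_intent (fuzzy_singleton a x))"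
  unfolding attribute_concept_def by (simp add: concept_of_intent_antimono fuzzy_singleton_mono)

lemma le_object_concept:
  "concept_le B (concept_of_extent (fuzzy_singleton b y)) (object_concept b)"
  unfolding object_concept_def by (simp add: concept_of_extent_mono fuzzy_singleton_mono)

lemma attribute_concept_proper:
  assumes a: "a \<in> A"
  shows "attribute_concept a \<in> proper_concepts"
proof -
  obtain b where b: "b \<in> B" "R a b \<noteq> bot"
    using normalized a unfolding normalized_context_def by blast
  have "top \<noteq> (bot::'l)" using b(2) by (metis bot_unique top_greatest)
  then show ?thesis
    unfolding attribute_concept_def
    using proper_concepts_of_singletons(2)[OF a b(1) _ b(2)] unit[OF a b(1)] by simp
qed

lemma object_concept_proper:
  assumes b: "b \<in> B"
  shows "object_concept b \<in> proper_concepts"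
proof -
  obtain a where a: "a \<in> A" "R a b \<noteq> bot"
    using normalized b unfolding normalized_context_def by blast
  have "top \<noteq> (bot::'l)" using a(2) by (metis bot_unique top_greatest)
  then show ?thesis
    unfolding object_concept_def
    using proper_concepts_of_singletons(1)[OF a(1) b a(2)] unit[OF a(1) b] by simp
qed

lemma attribute_concept_in_block_iff:
  assumes K: "is_block \<M> (concept_le B) K"
    and a: "a \<in> A" and b: "b \<in> B" and xy: "x \<noteq> bot" "y \<noteq> bot" "cj (\<sigma> a b) x y \<le> R a b"
  shows "attribute_concept a \<in> K \<longleftrightarrow> object_concept b \<in> K"
proof -
  let ?e = "concept_of_extent (fuzzy_singleton b y)"
  let ?h = "concept_of_intent (fuzzy_singleton a x)"
  note proper = proper_concepts_of_singletons[OF a b xy]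
  have "attribute_concept a \<in> K \<longleftrightarrow> ?h \<in> K"
    using block_member_iff_comparable[OF K attribute_concept_proper[OF a] proper(2)]
      attribute_concept_le by blast
  also have "\<dots> \<longleftrightarrow> ?e \<in> K"
    using block_member_iff_comparable[OF K proper(2) proper(1)] proper(3) by blast
  also have "\<dots> \<longleftrightarrow> object_concept b \<in> K"
    using block_member_iff_comparable[OF K proper(1) object_concept_proper[OF b]] le_object_concept
    by blast
  finally show ?thesis .
qed

lemma incident_concepts_in_block_iff:
  assumes "is_block \<M> (concept_le B) K" "a \<in> A" "b \<in> B" "R a b \<noteq> bot"
  shows "attribute_concept a \<in> K \<longleftrightarrow> object_concept b \<in> K"
proof -
  have "top \<noteq> (bot::'l)" using assms(4) by (metis bot_unique top_greatest)
  then show ?thesis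
    using attribute_concept_in_block_iff[OF assms(1-3) _ assms(4)] unit[OF assms(2,3)] by simp
qed

lemma block_contains_object_concept:
  assumes K: "is_block \<M> (concept_le B) K"
  obtains b where "b \<in> B" "object_concept b \<in> K"
proof -
  obtain g f where w: "(g, f) \<in> K" "(g, f) \<in> proper_concepts"
    using block_has_proper_element[OF K] by (metis surj_pair)
  then obtain a b where a: "a \<in> A" "f a \<noteq> bot" and b: "b \<in> B" "g b \<noteq> bot"
    using proper_concept_iff by blast
  let ?g = "fuzzy_singleton b (g b)"
  have g_le: "\<forall>b'\<in>B. ?g b' \<le> g b'" by (simp add: fuzzy_singleton_def)
  have "f a \<le> up ?g a"
    using up_antimono[OF g_le] a(1) w(2) unfolding concepts_def by auto
  moreover have "g b \<le> down (up ?g) b" using down_up_extensive[OF b(1), of ?g] by simp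
  ultimately have e_proper: "concept_of_extent ?g \<in> proper_concepts"
    unfolding concept_of_extent_def
    by (rule proper_concept_if_nonbot[OF concept_of_extent_in_concepts[unfolded concept_of_extent_def]
          a(1) b(1) _ _ a(2) b(2)])
  have "concept_le B (concept_of_extent ?g) (g, f)"
    using concept_of_extent_mono[OF g_le] concept_of_extent_eq[of g f] w(2) by simp
  then have "concept_of_extent ?g \<in> K"
    using block_member_iff_comparable[OF K w(2) e_proper] w(1) by blast
  then have "object_concept b \<in> K"
    using block_member_iff_comparable[OF K e_proper object_concept_proper[OF b(1)]] le_object_concept
    by blast
  then show ?thesis using b(1) that by blast
qed

lemma block_contains_attribute_concept:
  assumes K: "is_block \<M> (concept_le B) K"
  obtains a where "a \<in> A" "attribute_concept a \<in> K"
proof -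
  obtain b where b: "b \<in> B" "object_concept b \<in> K"
    using block_contains_object_concept[OF K] .
  obtain a where a: "a \<in> A" "R a b \<noteq> bot"
    using normalized b(1) unfolding normalized_context_def by blast
  show ?thesis using that a(1) incident_concepts_in_block_iff[OF K a(1) b(1) a(2)] b(2) by blast
qed

end

locale concept_block_decomposition = unital_normalized_context +
  fixes \<K>
  assumes block: "K \<in> \<K> \<Longrightarrow> is_block (concepts sw nw A B R \<sigma>) (concept_le B) K"
    and independent: "\<lbrakk>K1 \<in> \<K>; K2 \<in> \<K>; K1 \<noteq> K2\<rbrakk>
      \<Longrightarrow> independent_blocks (concepts sw nw A B R \<sigma>) (concept_le B) K1 K2"
    and covering: "\<Union>\<K> = concepts sw nw A B R \<sigma>"
begin

definition "attributes_of K = {a \<in> A. attribute_concept a \<in> K}"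

definition "objects_of K = {b \<in> B. object_concept b \<in> K}"

lemma attributes_of_subset: "attributes_of K \<subseteq> A"
  unfolding attributes_of_def by auto

lemma objects_of_subset: "objects_of K \<subseteq> B"
  unfolding objects_of_def by auto

lemma block_eqI:
  "\<lbrakk>K1 \<in> \<K>; K2 \<in> \<K>; c \<in> K1; c \<in> K2; c \<in> proper_concepts\<rbrakk> \<Longrightarrow> K1 = K2"
  using independent unfolding independent_blocks_def by blast

lemma attributes_of_disjoint:
  "\<lbrakk>K1 \<in> \<K>; K2 \<in> \<K>; K1 \<noteq> K2\<rbrakk> \<Longrightarrow> attributes_of K1 \<inter> attributes_of K2 = {}"
  unfolding attributes_of_def using block_eqI attribute_concept_proper by blast

lemma objects_of_disjoint:
  "\<lbrakk>K1 \<in> \<K>; K2 \<in> \<K>; K1 \<noteq> K2\<rbrakk> \<Longrightarrow> objects_of K1 \<inter> objects_of K2 = {}"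
  unfolding objects_of_def using block_eqI object_concept_proper by blast

lemma Union_attributes_of: "\<Union>(attributes_of ` \<K>) = A"
  unfolding attributes_of_def using covering attribute_concept_proper by blast

lemma Union_objects_of: "\<Union>(objects_of ` \<K>) = B"
  unfolding objects_of_def using covering object_concept_proper by blast

lemma separable_subcontext_of_block:
  assumes K: "K \<in> \<K>"
  shows "separable_subcontext A B R (attributes_of K) (objects_of K)"
proof -
  have incident_iff: "a \<in> attributes_of K \<longleftrightarrow> b \<in> objects_of K"
    if "a \<in> A" "b \<in> B" "R a b \<noteq> bot" for a b
    using incident_concepts_in_block_iff[OF block[OF K] that] that
    unfolding attributes_of_def objects_of_def by simp
  have "K \<subset> \<M>" using block[OF K] unfolding is_block_def by blast
  then obtain K' where K': "K' \<in> \<K>" "K' \<noteq> K" using covering by blast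
  obtain a' where "a' \<in> attributes_of K'"
    using block_contains_attribute_concept[OF block[OF K'(1)]] unfolding attributes_of_def by blast
  then have "a' \<in> A - attributes_of K"
    using attributes_of_disjoint[OF K'(1) K K'(2)] attributes_of_subset by blast
  obtain b' where "b' \<in> objects_of K'"
    using block_contains_object_concept[OF block[OF K'(1)]] unfolding objects_of_def by blast
  then have "b' \<in> B - objects_of K"
    using objects_of_disjoint[OF K'(1) K K'(2)] objects_of_subset by blast
  then have proper_subsets: "attributes_of K \<subset> A" "objects_of K \<subset> B"
    using \<open>a' \<in> A - attributes_of K\<close> attributes_of_subset objects_of_subset by blast+
  obtain a where a: "a \<in> attributes_of K"
    using block_contains_attribute_concept[OF block[OF K]] unfolding attributes_of_def by blast
  then obtain b where b: "b \<in> B" "R a b \<noteq> bot"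
    using normalized attributes_of_subset unfolding normalized_context_def by blast
  then have "b \<in> objects_of K" using incident_iff[OF _ b] a attributes_of_subset by blast
  show ?thesis
    unfolding separable_subcontext_def
  proof (intro conjI)
    show "\<exists>a\<in>attributes_of K. \<exists>b\<in>objects_of K. R a b \<noteq> bot"
      using a b(2) \<open>b \<in> objects_of K\<close> by blast
    show "\<forall>a\<in>attributes_of K. \<forall>b\<in>B - objects_of K. R a b = bot"
      using incident_iff attributes_of_subset objects_of_subset by blast
    show "\<forall>a\<in>A - attributes_of K. \<forall>b\<in>objects_of K. R a b = bot"
      using incident_iff attributes_of_subset objects_of_subset by blast
  qed (use proper_subsets a \<open>b \<in> objects_of K\<close> in blast)+
qed

lemma no_zero_divisors_across_blocks:
  assumes K: "K \<in> \<K>" and a: "a \<in> A" and b: "b \<in> B"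
    and across: "a \<in> attributes_of K \<longleftrightarrow> b \<notin> objects_of K"
  shows "no_zero_divisors (cj (\<sigma> a b))"
  unfolding no_zero_divisors_def
proof (intro allI impI notI)
  fix x y
  assume "x \<noteq> bot" "y \<noteq> bot" "cj (\<sigma> a b) x y = bot"
  then have "attribute_concept a \<in> K \<longleftrightarrow> object_concept b \<in> K"
    using attribute_concept_in_block_iff[OF block[OF K] a b, of x y] by simp
  then show False using across a b unfolding attributes_of_def objects_of_def by simp
qed

lemma independent_subcontext_decomposition_of_blocks:
  "independent_subcontext_decomposition cj A B R \<sigma> ((\<lambda>K. (attributes_of K, objects_of K)) ` \<K>)"
  unfolding independent_subcontext_decomposition_def
proof (intro conjI)
  show "(\<lambda>K. (attributes_of K, objects_of K)) ` \<K> \<noteq> {}"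
    using covering concept_of_extent_in_concepts by blast
  show "\<forall>(Y, X)\<in>(\<lambda>K. (attributes_of K, objects_of K)) ` \<K>. separable_subcontext A B R Y X"
    using separable_subcontext_of_block by auto
  show "\<forall>(Y1, X1)\<in>(\<lambda>K. (attributes_of K, objects_of K)) ` \<K>.
      \<forall>(Y2, X2)\<in>(\<lambda>K. (attributes_of K, objects_of K)) ` \<K>.
        (Y1, X1) \<noteq> (Y2, X2) \<longrightarrow> Y1 \<inter> Y2 = {} \<and> X1 \<inter> X2 = {}"
    using attributes_of_disjoint objects_of_disjoint by fastforce
  show "\<Union>(fst ` (\<lambda>K. (attributes_of K, objects_of K)) ` \<K>) = A"
    using Union_attributes_of by (simp add: image_image)
  show "\<Union>(snd ` (\<lambda>K. (attributes_of K, objects_of K)) ` \<K>) = B"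
    using Union_objects_of by (simp add: image_image)
  show "\<forall>(Y, X)\<in>(\<lambda>K. (attributes_of K, objects_of K)) ` \<K>.
      \<forall>(a, b)\<in>((A - Y) \<times> X) \<union> (Y \<times> (B - X)). no_zero_divisors (cj (\<sigma> a b))"
    using no_zero_divisors_across_blocks attributes_of_subset objects_of_subset by blast
qed

end

theorem theorem36:
  fixes n :: nat
    and cj sw nw :: "nat \<Rightarrow> 'l::complete_lattice \<Rightarrow> 'l \<Rightarrow> 'l"
    and A :: "'a set" and B :: "'b set"
    and R :: "'a \<Rightarrow> 'b \<Rightarrow> 'l" and \<sigma> :: "'a \<Rightarrow> 'b \<Rightarrow> nat"
  assumes adj: "\<forall>i\<in>{1..n}. adjoint_triple (cj i) (sw i) (nw i)"
    and unit: "\<forall>i\<in>{1..n}. \<forall>x. cj i x top = x \<and> cj i top x = x"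
    and A_ne: "A \<noteq> {}" and B_ne: "B \<noteq> {}"
    and \<sigma>_range: "\<forall>a\<in>A. \<forall>b\<in>B. \<sigma> a b \<in> {1..n}"
    and norm: "normalized_context A B R"
    and blocks: "has_block_decomposition (concepts sw nw A B R \<sigma>) (concept_le B)"
  shows "\<exists>D. independent_subcontext_decomposition cj A B R \<sigma> D"
proof -
  obtain \<K> where "\<forall>K\<in>\<K>. is_block (concepts sw nw A B R \<sigma>) (concept_le B) K"
    and "\<forall>K1\<in>\<K>. \<forall>K2\<in>\<K>. K1 \<noteq> K2 \<longrightarrow> independent_blocks (concepts sw nw A B R \<sigma>) (concept_le B) K1 K2"
    and "\<Union>\<K> = concepts sw nw A B R \<sigma>"
    using blocks unfolding has_block_decomposition_def by blast
  then interpret concept_block_decomposition cj sw nw A B R \<sigma> \<K>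
    using adj unit \<sigma>_range norm by unfold_locales auto
  show ?thesis using independent_subcontext_decomposition_of_blocks by blast
qed

end
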